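(* If $m\ge 38$ is even and $m=3t$ for some positive integer $t$, then $\lambda(L_m)<\lambda(Y_m)$.
   Context: $\lambda(\cdot)$ denotes the largest adjacency eigenvalue. For even $m$, $L_m$ is obtained from a 5-cycle $u_1u_2u_3u_4u_5$ by adding $\frac{m-6}{2}$ new vertices each adjacent exactly to $u_1$ and $u_3$, and one new vertex adjacent only to $u_1$ (equivalently, $SK_{2,\frac{m-2}{2}}$, i.e. $K_{2,\frac{m-2}{2}}$ with one edge subdivided, with a pendant edge attached at a vertex of maximum degree). When $\frac{m-3}{3}$ is a positive integer, $Y_m$ is obtained from $C_5$ by replacing one vertex by an independent set $I$ of $\frac{m-3}{3}$ vertices each adjacent to both neighbours of the replaced vertex, then adding a new vertex adjacent to all vertices of $I$. *)

theory Defs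
  imports "Jordan_Normal_Form.Char_Poly"
begin

definition adj_matrix :: "nat \<Rightarrow> nat set set \<Rightarrow> real mat" where
  "adj_matrix n E = mat n n (\<lambda>(i, j). if {i, j} \<in> E then 1 else 0)"

definition lambda_max :: "nat \<Rightarrow> nat set set \<Rightarrow> real" where
  "lambda_max n E = Max {x. eigenvalue (adj_matrix n E) x}"

text \<open>L_m: 5-cycle u1..u5 = 0..4; k = (m-6)/2 vertices 5..<5+k adjacent to u1 (=0)
  and u3 (=2); one pendant vertex 5+k adjacent to u1 (=0).  It has 6+k vertices and m edges.\<close>
definition L_k :: "nat \<Rightarrow> nat" where "L_k m = (m - 6) div 2"

definition L_n :: "nat \<Rightarrow> nat" where "L_n m = L_k m + 6"

definition L_edges :: "nat \<Rightarrow> nat set set" where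
  "L_edges m =
     {{i, (i + 1) mod 5} | i. i < 5}
   \<union> {{0, v} | v. v \<in> {5..<5 + L_k m}}
   \<union> {{2, v} | v. v \<in> {5..<5 + L_k m}}
   \<union> {{0, 5 + L_k m}}"

text \<open>Y_m: C5 = u1..u5 with u1 replaced by an independent set I of s = (m-3)/3 vertices
  adjacent to u2 and u5, plus a new vertex adjacent to all of I.
  Encoding: u2,u3,u4,u5 = 0,1,2,3; I = {4..<4+s}; new vertex 4+s.
  It has s+5 vertices and m edges.\<close>
definition Y_s :: "nat \<Rightarrow> nat" where "Y_s m = (m - 3) div 3"

definition Y_n :: "nat \<Rightarrow> nat" where "Y_n m = Y_s m + 5"

definition Y_edges :: "nat \<Rightarrow> nat set set" where
  "Y_edges m =
     {{0, 1}, {1, 2}, {2, 3}}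
   \<union> {{0, v} | v. v \<in> {4..<4 + Y_s m}}
   \<union> {{3, v} | v. v \<in> {4..<4 + Y_s m}}
   \<union> {{v, 4 + Y_s m} | v. v \<in> {4..<4 + Y_s m}}"

definition lambda_L :: "nat \<Rightarrow> real" where "lambda_L m = lambda_max (L_n m) (L_edges m)"
definition lambda_Y :: "nat \<Rightarrow> real" where "lambda_Y m = lambda_max (Y_n m) (Y_edges m)"

end

theory Submission
  imports Defs
begin

text \<open>
  For \<open>m = 6 r\<close> both graphs carry a positive eigenvector that is constant on each class of
  twin vertices, and a positive eigenvector always belongs to the largest eigenvalue
  (Collatz--Wielandt).  Solving the small linear systems for these vectors shows that every
  root \<open>x \<ge> 5\<close> of \<open>L_poly_a x = r L_poly_b x\<close> equals \<open>\<lambda>(L\<^sub>m)\<close> and every root \<open>y \<ge> 5\<close> of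
  \<open>Y_poly_a y = r Y_poly_b y\<close> equals \<open>\<lambda>(Y\<^sub>m)\<close>.  A polynomial inequality gives
  \<open>Y_poly_a x < r Y_poly_b x\<close> at such an \<open>x\<close>, while \<open>Y_poly_a r > r Y_poly_b r\<close>, so the
  intermediate value theorem yields such a \<open>y\<close> strictly above \<open>x\<close>.
\<close>

definition neighbours :: "nat \<Rightarrow> nat set set \<Rightarrow> nat \<Rightarrow> nat set" where
  "neighbours n E i = {j \<in> {..<n}. {i, j} \<in> E}"

lemma finite_eigenvalues:
  assumes "(A :: 'a :: field mat) \<in> carrier_mat n n"
  shows "finite {k. eigenvalue A k}"
proof -
  have "char_poly A \<noteq> 0"
    using degree_monic_char_poly[OF assms] by auto
  then show ?thesis
    using eigenvalue_root_char_poly[OF assms] poly_roots_finite by simp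
qed

lemma sum_neighbours: "sum f (neighbours n E i) = (\<Sum>j<n. if {i, j} \<in> E then f j else 0)"
  unfolding neighbours_def by (rule sum.inter_filter) simp

lemma adj_matrix_mult_vec_nth:
  assumes "i < n" "dim_vec v = n"
  shows "(adj_matrix n E *\<^sub>v v) $ i = (\<Sum>j\<in>neighbours n E i. v $ j)"
  using assms by (auto simp: adj_matrix_def scalar_prod_def sum_neighbours lessThan_atLeast0 intro!: sum.cong)

lemma sum_neighbours_swap:
  fixes f g :: "nat \<Rightarrow> 'a :: comm_semiring_0"
  shows "(\<Sum>i<n. f i * sum g (neighbours n E i)) = (\<Sum>j<n. g j * sum f (neighbours n E j))"
proof -
  have "(\<Sum>i<n. f i * sum g (neighbours n E i)) = (\<Sum>i<n. \<Sum>j<n. f i * (if {i, j} \<in> E then g j else 0))"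
    by (simp add: sum_neighbours sum_distrib_left)
  also have "\<dots> = (\<Sum>j<n. \<Sum>i<n. g j * (if {j, i} \<in> E then f i else 0))"
    by (subst sum.swap) (auto intro!: sum.cong simp: insert_commute mult.commute)
  also have "\<dots> = (\<Sum>j<n. g j * sum f (neighbours n E j))"
    by (simp add: sum_neighbours sum_distrib_left)
  finally show ?thesis .
qed

lemma eigenvalue_adj_matrixI:
  assumes "i\<^sub>0 < n" "u i\<^sub>0 \<noteq> 0" and eq: "\<And>i. i < n \<Longrightarrow> sum u (neighbours n E i) = x * u i"
  shows "eigenvalue (adj_matrix n E) x"
  unfolding eigenvalue_def eigenvector_def
proof (intro exI conjI)
  have dim: "dim_row (adj_matrix n E) = n"
    by (simp add: adj_matrix_def)
  show "vec n u \<in> carrier_vec (dim_row (adj_matrix n E))"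
    by (simp add: dim)
  show "vec n u \<noteq> 0\<^sub>v (dim_row (adj_matrix n E))"
    using assms(1,2) by (auto simp: dim vec_eq_iff)
  have sum_vec: "sum (($) (vec n u)) (neighbours n E i) = sum u (neighbours n E i)" for i
    by (rule sum.cong) (auto simp: neighbours_def)
  show "adj_matrix n E *\<^sub>v vec n u = x \<cdot>\<^sub>v vec n u"
  proof (rule eq_vecI)
    fix i
    assume "i < dim_vec (x \<cdot>\<^sub>v vec n u)"
    then have "i < n"
      by simp
    then show "(adj_matrix n E *\<^sub>v vec n u) $ i = (x \<cdot>\<^sub>v vec n u) $ i"
      using sum_vec eq[of i] adj_matrix_mult_vec_nth[of i n "vec n u" E] by simp
  qed (simp add: dim)
qed

text \<open>Collatz--Wielandt: weight the moduli of an eigenvector by \<open>u\<close> and use the symmetry of adjacency.\<close>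
lemma eigenvalue_adj_matrix_le:
  assumes pos: "\<And>i. i < n \<Longrightarrow> 0 < u i"
    and super: "\<And>i. i < n \<Longrightarrow> sum u (neighbours n E i) \<le> \<mu> * u i"
    and "eigenvalue (adj_matrix n E) z"
  shows "z \<le> \<mu>"
proof -
  obtain v where v: "v \<in> carrier_vec n" "v \<noteq> 0\<^sub>v n" "adj_matrix n E *\<^sub>v v = z \<cdot>\<^sub>v v"
    using assms(3) by (auto simp: eigenvalue_def eigenvector_def adj_matrix_def)
  define w where "w j = \<bar>v $ j\<bar>" for j
  have w_le: "\<bar>z\<bar> * w i \<le> sum w (neighbours n E i)" if "i < n" for i
  proof -
    have "z * v $ i = (\<Sum>j\<in>neighbours n E i. v $ j)"
      using arg_cong[OF v(3), of "\<lambda>v. v $ i"] v(1) that by (simp add: adj_matrix_mult_vec_nth)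
    then have "\<bar>z\<bar> * w i = \<bar>\<Sum>j\<in>neighbours n E i. v $ j\<bar>"
      by (simp add: w_def flip: abs_mult)
    then show ?thesis
      unfolding w_def by (metis sum_abs)
  qed
  obtain i\<^sub>0 where "i\<^sub>0 < n" "v $ i\<^sub>0 \<noteq> 0"
    using v(1,2) by (metis carrier_vecD eq_vecI index_zero_vec(1,2))
  then have S_pos: "0 < (\<Sum>i<n. u i * w i)"
    by (intro sum_pos2[of _ i\<^sub>0]) (auto simp: w_def less_imp_le pos)
  have "\<bar>z\<bar> * (\<Sum>i<n. u i * w i) = (\<Sum>i<n. u i * (\<bar>z\<bar> * w i))"
    by (simp add: sum_distrib_left mult_ac)
  also have "\<dots> \<le> (\<Sum>i<n. u i * sum w (neighbours n E i))"
    by (intro sum_mono mult_left_mono w_le) (auto simp: less_imp_le pos)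
  also have "\<dots> = (\<Sum>j<n. w j * sum u (neighbours n E j))"
    by (rule sum_neighbours_swap)
  also have "\<dots> \<le> (\<Sum>j<n. w j * (\<mu> * u j))"
    by (intro sum_mono mult_left_mono super) (auto simp: w_def)
  also have "\<dots> = \<mu> * (\<Sum>i<n. u i * w i)"
    by (simp add: sum_distrib_left mult_ac)
  finally have "\<bar>z\<bar> \<le> \<mu>"
    using S_pos by simp
  then show ?thesis
    by simp
qed

lemma lambda_max_eq_pos_eigenvector:
  assumes "0 < n" and pos: "\<And>i. i < n \<Longrightarrow> 0 < u i"
    and eq: "\<And>i. i < n \<Longrightarrow> sum u (neighbours n E i) = x * u i"
  shows "lambda_max n E = x"
  unfolding lambda_max_def
proof (rule Max_eqI)
  show "finite {x. eigenvalue (adj_matrix n E) x}"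
    by (rule finite_eigenvalues[of _ n]) (simp add: adj_matrix_def)
  have super: "sum u (neighbours n E i) \<le> x * u i" if "i < n" for i
    using eq[OF that] by simp
  show "z \<le> x" if "z \<in> {x. eigenvalue (adj_matrix n E) x}" for z
    using eigenvalue_adj_matrix_le[OF pos super] that by blast
  have "u 0 \<noteq> 0"
    using pos[OF \<open>0 < n\<close>] by simp
  then show "x \<in> {x. eigenvalue (adj_matrix n E) x}"
    using eigenvalue_adj_matrixI[OF \<open>0 < n\<close> _ eq] by blast
qed

lemma doubleton_mem_stars:
  "{i, j} \<in> {{a, v} | v. v \<in> K} \<longleftrightarrow> i = a \<and> j \<in> K \<or> j = a \<and> i \<in> K"
  "{i, j} \<in> {{v, a} | v. v \<in> K} \<longleftrightarrow> i = a \<and> j \<in> K \<or> j = a \<and> i \<in> K"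
  by (auto simp: doubleton_eq_iff)

lemma cycle5_edges: "{{i, (i + 1) mod 5} | i. i < (5::nat)} = {{0,1},{1,2},{2,3},{3,4},{4,0}}"
proof -
  have "{{i, (i + 1) mod 5} | i. i < (5::nat)} = (\<lambda>i. {i, (i + 1) mod 5}) ` {..<5}"
    by blast
  also have "{..<5::nat} = {0, 1, 2, 3, 4}"
    by (auto simp: lessThan_def)
  finally show ?thesis
    by (simp add: numeral_2_eq_2)
qed

lemma mem_L_edges:
  "{i, j} \<in> L_edges m \<longleftrightarrow> {i, j} \<in> {{0,1},{1,2},{2,3},{3,4},{4,0},{0, 5 + L_k m}}
     \<or> (i = 0 \<or> i = 2) \<and> j \<in> {5..<5 + L_k m} \<or> (j = 0 \<or> j = 2) \<and> i \<in> {5..<5 + L_k m}"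
  unfolding L_edges_def cycle5_edges by (simp only: Un_iff doubleton_mem_stars insert_iff empty_iff) argo

lemma L_neighbours:
  fixes m :: nat
  defines "k \<equiv> L_k m" and "N \<equiv> neighbours (L_n m) (L_edges m)"
  shows "N 0 = {1, 4, 5 + k} \<union> {5..<5 + k}" "N 1 = {0, 2}" "N 2 = {1, 3} \<union> {5..<5 + k}"
    "N 3 = {2, 4}" "N 4 = {0, 3}" "v \<in> {5..<5 + k} \<Longrightarrow> N v = {0, 2}" "N (5 + k) = {0}"
  unfolding N_def neighbours_def mem_L_edges L_n_def k_def
  by (auto simp: doubleton_eq_iff)

lemma L_eigenvector:
  fixes u :: "nat \<Rightarrow> real" and m :: nat
  defines "k \<equiv> L_k m" and "N \<equiv> neighbours (L_n m) (L_edges m)"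
  assumes u: "u 0 = a" "u 1 = b" "u 2 = c" "u 3 = d" "u 4 = e" "u (5 + k) = p"
    "\<And>v. v \<in> {5..<5 + k} \<Longrightarrow> u v = b"
  assumes eqs: "b + e + k * b + p = x * a" "a + c = x * b" "b + d + k * b = x * c"
    "c + e = x * d" "d + a = x * e" "a = x * p"
  assumes "i < L_n m"
  shows "sum u (N i) = x * u i"
proof -
  have sum_K: "sum u {5..<5 + k} = k * b"
    using u(7) by simp
  note N = L_neighbours[where m = m, folded k_def N_def]
  txt \<open>\<open>One_nat_def\<close> would turn vertex \<open>1\<close> into \<open>Suc 0\<close>, where \<open>N\<close> and \<open>u\<close> no longer match.\<close>
  have "sum u (N 0) = x * u 0" "sum u (N 1) = x * u 1" "sum u (N 2) = x * u 2"
    "sum u (N 3) = x * u 3" "sum u (N 4) = x * u 4" "sum u (N (5 + k)) = x * u (5 + k)"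
    "\<And>v. v \<in> {5..<5 + k} \<Longrightarrow> sum u (N v) = x * u v"
    using eqs by (simp_all add: N u sum_K del: One_nat_def)
  moreover consider "i \<le> 4" | "i \<in> {5..<5 + k}" | "i = 5 + k"
    using \<open>i < L_n m\<close> unfolding L_n_def k_def by force
  ultimately show ?thesis
    by (cases; fastforce simp: le_Suc_eq numeral_eq_Suc)
qed

lemma mem_Y_edges:
  "{i, j} \<in> Y_edges m \<longleftrightarrow> {i, j} \<in> {{0,1},{1,2},{2,3}}
     \<or> (i = 0 \<or> i = 3 \<or> i = 4 + Y_s m) \<and> j \<in> {4..<4 + Y_s m}
     \<or> (j = 0 \<or> j = 3 \<or> j = 4 + Y_s m) \<and> i \<in> {4..<4 + Y_s m}"
  unfolding Y_edges_def by (simp only: Un_iff doubleton_mem_stars insert_iff empty_iff) argo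

lemma Y_neighbours:
  fixes m :: nat
  defines "s \<equiv> Y_s m" and "N \<equiv> neighbours (Y_n m) (Y_edges m)"
  shows "N 0 = {1} \<union> {4..<4 + s}" "N 1 = {0, 2}" "N 2 = {1, 3}" "N 3 = {2} \<union> {4..<4 + s}"
    "v \<in> {4..<4 + s} \<Longrightarrow> N v = {0, 3, 4 + s}" "N (4 + s) = {4..<4 + s}"
  unfolding N_def neighbours_def mem_Y_edges Y_n_def s_def
  by (auto simp: doubleton_eq_iff)

lemma Y_eigenvector:
  fixes u :: "nat \<Rightarrow> real" and m :: nat
  defines "s \<equiv> Y_s m" and "N \<equiv> neighbours (Y_n m) (Y_edges m)"
  assumes u: "u 0 = A" "u 1 = B" "u 2 = B" "u 3 = A" "u (4 + s) = D"
    "\<And>v. v \<in> {4..<4 + s} \<Longrightarrow> u v = C"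
  assumes eqs: "B + s * C = y * A" "A + B = y * B" "2 * A + D = y * C" "s * C = y * D"
  assumes "i < Y_n m"
  shows "sum u (N i) = y * u i"
proof -
  have sum_I: "sum u {4..<4 + s} = s * C"
    using u(6) by simp
  note N = Y_neighbours[where m = m, folded s_def N_def]
  have "sum u (N 0) = y * u 0" "sum u (N 1) = y * u 1" "sum u (N 2) = y * u 2"
    "sum u (N 3) = y * u 3" "sum u (N (4 + s)) = y * u (4 + s)"
    "\<And>v. v \<in> {4..<4 + s} \<Longrightarrow> sum u (N v) = y * u v"
    using eqs by (simp_all add: N u sum_I del: One_nat_def)
  moreover consider "i \<le> 3" | "i \<in> {4..<4 + s}" | "i = 4 + s"
    using \<open>i < Y_n m\<close> unfolding Y_n_def s_def by force
  ultimately show ?thesis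
    by (cases; fastforce simp: le_Suc_eq numeral_eq_Suc)
qed

definition L_poly_a :: "real \<Rightarrow> real" where
  "L_poly_a x = x^7 + x^6 - 7 * x^3 - 3 * x^2 + 6 * x + 2"

definition L_poly_b :: "real \<Rightarrow> real" where
  "L_poly_b x = 6 * x^5 + 6 * x^4 - 15 * x^3 - 9 * x^2 + 9 * x + 3"

definition Y_poly_a :: "real \<Rightarrow> real" where
  "Y_poly_a x = x^4 - x^3 + 2 * x^2 - 3 * x - 1"

definition Y_poly_b :: "real \<Rightarrow> real" where
  "Y_poly_b x = 6 * x^2 - 6 * x - 2"

lemma L_poly_b_pos:
  assumes "5 \<le> x"
  shows "0 < L_poly_b x"
proof -
  obtain z where z: "0 \<le> z" "x = z + 5"
    using assms by (auto intro: that[of "x - 5"])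
  have "L_poly_b x = 20448 + 20544 * z + 8166 * z^2 + 1605 * z^3 + 156 * z^4 + 6 * z^5"
    unfolding L_poly_b_def z(2) by (simp add: eval_nat_numeral algebra_simps)
  also have "0 < \<dots>"
    using z(1) by (intro add_pos_nonneg) auto
  finally show ?thesis .
qed

lemma L_Y_poly_cross:
  assumes "5 \<le> x"
  shows "Y_poly_a x * L_poly_b x < L_poly_a x * Y_poly_b x"
proof -
  obtain z where z: "0 \<le> z" "x = z + 5"
    using assms by (auto intro: that[of "x - 5"])
  have "L_poly_a x * Y_poly_b x - Y_poly_a x * L_poly_b x =
      34944 + 58384 * z + 40884 * z^2 + 15566 * z^3 + 3484 * z^4 + 459 * z^5 + 33 * z^6 + z^7"
    unfolding L_poly_a_def L_poly_b_def Y_poly_a_def Y_poly_b_def z(2)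
    by (simp add: eval_nat_numeral algebra_simps)
  also have "0 < \<dots>"
    using z(1) by (intro add_pos_nonneg) auto
  finally show ?thesis
    by simp
qed

lemma L_poly_root_exists:
  assumes "7 \<le> r"
  shows "\<exists>x. 5 \<le> x \<and> x \<le> r \<and> L_poly_a x = r * L_poly_b x"
proof -
  obtain z where z: "0 \<le> z" "r = z + 7"
    using assms by (auto intro: that[of "r - 7"])
  have "L_poly_a r - r * L_poly_b r =
      170592 + 268012 * z + 156732 * z^2 + 47217 * z^3 + 8135 * z^4 + 813 * z^5 + 44 * z^6 + z^7"
    unfolding L_poly_a_def L_poly_b_def z(2) by (simp add: eval_nat_numeral algebra_simps)
  also have "0 < \<dots>"
    using z(1) by (intro add_pos_nonneg) auto
  finally have "0 \<le> L_poly_a r - r * L_poly_b r"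
    by simp
  moreover have "L_poly_a 5 - r * L_poly_b 5 \<le> 0"
    using assms by (simp add: L_poly_a_def L_poly_b_def)
  moreover have "continuous_on {5..r} (\<lambda>x. L_poly_a x - r * L_poly_b x)"
    unfolding L_poly_a_def L_poly_b_def by (intro continuous_intros)
  ultimately show ?thesis
    using IVT'[of "\<lambda>x. L_poly_a x - r * L_poly_b x" 5 0 r] assms by auto
qed

lemma Y_poly_root_above:
  assumes "7 \<le> r" "x \<le> r" "Y_poly_a x < r * Y_poly_b x"
  shows "\<exists>y>x. Y_poly_a y = r * Y_poly_b y"
proof -
  obtain z where z: "0 \<le> z" "r = z + 7"
    using assms by (auto intro: that[of "r - 7"])
  have "Y_poly_a r - r * Y_poly_b r = 384 + 454 * z + 155 * z^2 + 21 * z^3 + z^4"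
    unfolding Y_poly_a_def Y_poly_b_def z(2) by (simp add: eval_nat_numeral algebra_simps)
  also have "0 < \<dots>"
    using z(1) by (intro add_pos_nonneg) auto
  finally have "0 \<le> Y_poly_a r - r * Y_poly_b r"
    by simp
  moreover have "continuous_on {x..r} (\<lambda>x. Y_poly_a x - r * Y_poly_b x)"
    unfolding Y_poly_a_def Y_poly_b_def by (intro continuous_intros)
  ultimately obtain y where "x \<le> y" "Y_poly_a y - r * Y_poly_b y = 0"
    using IVT'[of "\<lambda>x. Y_poly_a x - r * Y_poly_b x" x 0 r] assms by auto
  moreover have "y \<noteq> x"
    using assms(3) calculation(2) by auto
  ultimately show ?thesis
    by force
qed

lemma Y_poly_below_at_L_root:
  assumes "5 \<le> x" "L_poly_a x = r * L_poly_b x"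
  shows "Y_poly_a x < r * Y_poly_b x"
proof -
  have "L_poly_b x * Y_poly_a x < L_poly_b x * (r * Y_poly_b x)"
    using L_Y_poly_cross[OF assms(1)] assms(2) by (simp add: algebra_simps)
  then show ?thesis
    using L_poly_b_pos[OF assms(1)] by simp
qed

lemma real_L_k:
  assumes "m = 6 * r" "1 \<le> r"
  shows "real (L_k m) = 3 * real r - 3"
proof -
  have "m - 6 = 2 * (3 * r - 3)"
    using assms by simp
  then show ?thesis
    using assms(2) by (simp add: L_k_def of_nat_diff)
qed

lemma real_Y_s:
  assumes "m = 6 * r" "1 \<le> r"
  shows "real (Y_s m) = 2 * real r - 1"
proof -
  have "m - 3 = 3 * (2 * r - 1)"
    using assms by simp
  then show ?thesis
    using assms(2) by (simp add: Y_s_def of_nat_diff)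
qed

lemma lambda_L_eq_root:
  fixes r :: nat and x :: real
  assumes "m = 6 * r" "1 \<le> r" "5 \<le> x" "L_poly_a x = r * L_poly_b x"
  shows "lambda_L m = x"
proof -
  define k where "k = L_k m"
  have k: "real k = 3 * real r - 3"
    unfolding k_def using assms(1,2) by (rule real_L_k)
  txt \<open>The equations at vertices 1, 3, 4, at the pendant vertex and at the twins of vertex 1 hold
    identically in \<open>x\<close>; those at 0 and 2 are the root condition.\<close>
  define q where "q = x * (x^2 + x - 1)"
  define w where "w = x^3 + x^2 - 2 * x - 1"
  define a where "a = q * x * (x^2 - 1)"
  define b where "b = (q + w) * (x^2 - 1)"
  define c where "c = w * x * (x^2 - 1)"
  define d where "d = (q + x * w) * x"
  define e where "e = (w + x * q) * x"
  define p where "p = q * (x^2 - 1)"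
  have "x * a - (b + e + k * b + p) = L_poly_a x - r * L_poly_b x"
    "x * c - (b + d + k * b) = L_poly_a x - r * L_poly_b x"
    unfolding a_def b_def c_def d_def e_def p_def q_def w_def L_poly_a_def L_poly_b_def k
    by (simp_all add: eval_nat_numeral algebra_simps)
  moreover have "a + c = x * b" "c + e = x * d" "d + a = x * e" "a = x * p"
    unfolding a_def b_def c_def d_def e_def p_def by (simp_all add: eval_nat_numeral algebra_simps)
  ultimately have eqs: "b + e + k * b + p = x * a" "a + c = x * b" "b + d + k * b = x * c"
    "c + e = x * d" "d + a = x * e" "a = x * p"
    using assms(4) by simp_all
  have "25 \<le> x^2" "25 * x \<le> x^3"
    using assms(3) power_mono[of 5 x 2] mult_mono[of 25 "x^2" x x]
    by (simp_all add: power3_eq_cube power2_eq_square)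
  then have "0 < q" "0 < w" "0 < x^2 - 1"
    using assms(3) unfolding q_def w_def by (simp_all add: zero_less_mult_iff)
  then have "0 < a" "0 < b" "0 < c" "0 < d" "0 < e" "0 < p"
    using assms(3) unfolding a_def b_def c_def d_def e_def p_def by (simp_all add: add_pos_pos)
  define u where "u j = (if j = 0 then a else if j = 1 then b else if j = 2 then c
    else if j = 3 then d else if j = 4 then e else if j < 5 + k then b else p)" for j
  have pos: "0 < u j" for j
    using \<open>0 < a\<close> \<open>0 < b\<close> \<open>0 < c\<close> \<open>0 < d\<close> \<open>0 < e\<close> \<open>0 < p\<close>
    by (simp add: u_def)
  have eig: "sum u (neighbours (L_n m) (L_edges m) i) = x * u i" if "i < L_n m" for i
    using eqs that unfolding k_def by (intro L_eigenvector) (auto simp: u_def k_def)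
  show ?thesis
    unfolding lambda_L_def by (rule lambda_max_eq_pos_eigenvector[OF _ pos eig]) (simp add: L_n_def)
qed

lemma lambda_Y_eq_root:
  fixes r :: nat and y :: real
  assumes "m = 6 * r" "1 \<le> r" "5 \<le> y" "Y_poly_a y = r * Y_poly_b y"
  shows "lambda_Y m = y"
proof -
  define s where "s = Y_s m"
  have s: "real s = 2 * real r - 1"
    unfolding s_def by (rule real_Y_s[OF assms(1,2)])
  have "0 < real s"
    using assms(2) unfolding s by simp
  define A where "A = (y - 1) * s * y"
  define B where "B = s * y"
  define C where "C = (y^2 - y - 1) * y"
  define D where "D = s * (y^2 - y - 1)"
  have "y * C - (2 * A + D) = Y_poly_a y - r * Y_poly_b y"
    unfolding A_def C_def D_def Y_poly_a_def Y_poly_b_def s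
    by (simp add: eval_nat_numeral algebra_simps)
  moreover have "B + s * C = y * A" "A + B = y * B" "s * C = y * D"
    unfolding A_def B_def C_def D_def by (simp_all add: eval_nat_numeral algebra_simps)
  ultimately have eqs: "B + s * C = y * A" "A + B = y * B" "2 * A + D = y * C" "s * C = y * D"
    using assms(4) by simp_all
  have "5 * y \<le> y^2"
    using assms(3) mult_right_mono[of 5 y y] by (simp add: power2_eq_square)
  then have "y \<le> y^2 - 4"
    using assms(3) by linarith
  then have "0 < A" "0 < B" "0 < C" "0 < D"
    using assms(3) \<open>0 < real s\<close> unfolding A_def B_def C_def D_def by simp_all
  define u where "u j = (if j = 0 \<or> j = 3 then A else if j = 1 \<or> j = 2 then B
    else if j < 4 + s then C else D)" for j
  have pos: "0 < u j" for j
    using \<open>0 < A\<close> \<open>0 < B\<close> \<open>0 < C\<close> \<open>0 < D\<close> by (simp add: u_def)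
  have eig: "sum u (neighbours (Y_n m) (Y_edges m) i) = y * u i" if "i < Y_n m" for i
    using eqs that unfolding s_def by (intro Y_eigenvector) (auto simp: u_def s_def)
  show ?thesis
    unfolding lambda_Y_def by (rule lambda_max_eq_pos_eigenvector[OF _ pos eig]) (simp add: Y_n_def)
qed

theorem lemma2p2:
  fixes m t :: nat
  assumes "m \<ge> 38" and "even m" and "t > 0" and "m = 3 * t"
  shows "lambda_L m < lambda_Y m"
proof -
  obtain r where "t = 2 * r"
    using assms(2,4) by (auto simp: even_mult_iff elim: evenE)
  then have m: "m = 6 * r"
    using assms(4) by simp
  have r: "7 \<le> r"
    using assms(1) m by simp
  obtain x :: real where x: "5 \<le> x" "x \<le> r" "L_poly_a x = r * L_poly_b x"
    using L_poly_root_exists[of r] r by auto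
  obtain y where y: "x < y" "Y_poly_a y = r * Y_poly_b y"
    using Y_poly_root_above[OF _ x(2) Y_poly_below_at_L_root[OF x(1,3)]] r by auto
  have "lambda_L m = x"
    using lambda_L_eq_root[OF m _ x(1,3)] r by simp
  moreover have "lambda_Y m = y"
    using lambda_Y_eq_root[OF m _ _ y(2)] r x(1) y(1) by simp
  ultimately show ?thesis
    using y(1) by simp
qed

end
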